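(* Consider the two-agent technology adoption game. There exists $\varepsilon_0>0$ such that for every $\varepsilon\in(0,\varepsilon_0)$ there is a nonempty open interval $J\subset(0,1)$ of costs such that for every $c\in J$: under random seeding there is an equilibrium in which the probability that both agents adopt is strictly greater than the probability that both adopt in every equilibrium under any single deterministic seed (seed 1 or seed 2).
   Context: Fix $\rho\in(0,1)$, $\varepsilon\in(0,1)$, two linked agents $1,2$, state $\theta\in\{g,b\}$ with $\Pr(\theta=g)=\rho$; in state $b$ no messages are sent. Every transmission is lost independently with probability $\varepsilon$. Deterministic seed $i$: in state $g$ the planner sends to $i$, who, if she receives it, forwards it to the other agent. Random seeding: the planner's seed is $1$ or $2$ with probability $1/2$ each, independently of everything else, and is not observed by the agents; then messages flow as under that deterministic seed. In all cases each agent observes only whether she received a message. Technology adoption game with cost $c\in(0,1)$: each agent chooses $a_i\in\{0,1\}$ (possibly mixed) as a function of her information; payoff $a_i(\mathbf 1[\theta=g\text{ and both adopt}]-c)$; equilibria are Bayesian Nash equilibria. *)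

theory Defs
  imports Complex_Main
begin

text \<open>Joint law of (theta, signal of seeded agent, signal of the other agent) under a
  deterministic seed. theta = True means state g. The seeded agent receives the planner's
  message with prob. 1-eps (only in state g); if she receives it she forwards it, and the
  other agent receives it with prob. 1-eps.\<close>
definition seed_dist :: "real \<Rightarrow> real \<Rightarrow> bool \<Rightarrow> bool \<Rightarrow> bool \<Rightarrow> real" where
  "seed_dist \<rho> \<epsilon> th rs ro =
     (if th then \<rho> * (if rs \<and> ro then (1 - \<epsilon>)^2
                      else if rs \<and> \<not> ro then (1 - \<epsilon>) * \<epsilon>
                      else if \<not> rs \<and> \<not> ro then \<epsilon> else 0)
      else (1 - \<rho>) * (if \<not> rs \<and> \<not> ro then 1 else 0))"

text \<open>Information structures: joint probabilities P theta s1 s2 (s_i = agent i received).\<close>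
definition seed1 :: "real \<Rightarrow> real \<Rightarrow> bool \<Rightarrow> bool \<Rightarrow> bool \<Rightarrow> real" where
  "seed1 \<rho> \<epsilon> th s1 s2 = seed_dist \<rho> \<epsilon> th s1 s2"

definition seed2 :: "real \<Rightarrow> real \<Rightarrow> bool \<Rightarrow> bool \<Rightarrow> bool \<Rightarrow> real" where
  "seed2 \<rho> \<epsilon> th s1 s2 = seed_dist \<rho> \<epsilon> th s2 s1"

definition random_seed :: "real \<Rightarrow> real \<Rightarrow> bool \<Rightarrow> bool \<Rightarrow> bool \<Rightarrow> real" where
  "random_seed \<rho> \<epsilon> th s1 s2 = (seed1 \<rho> \<epsilon> th s1 s2 + seed2 \<rho> \<epsilon> th s1 s2) / 2"

definition mixed :: "(bool \<Rightarrow> real) \<Rightarrow> bool" where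
  "mixed \<sigma> \<longleftrightarrow> (\<forall>s. 0 \<le> \<sigma> s \<and> \<sigma> s \<le> 1)"

definition payoff1 :: "(bool \<Rightarrow> bool \<Rightarrow> bool \<Rightarrow> real) \<Rightarrow> real \<Rightarrow> (bool \<Rightarrow> real) \<Rightarrow> (bool \<Rightarrow> real) \<Rightarrow> real" where
  "payoff1 P c \<sigma>1 \<sigma>2 = (\<Sum>th\<in>UNIV. \<Sum>s1\<in>UNIV. \<Sum>s2\<in>UNIV.
      P th s1 s2 * \<sigma>1 s1 * ((if th then \<sigma>2 s2 else 0) - c))"

definition payoff2 :: "(bool \<Rightarrow> bool \<Rightarrow> bool \<Rightarrow> real) \<Rightarrow> real \<Rightarrow> (bool \<Rightarrow> real) \<Rightarrow> (bool \<Rightarrow> real) \<Rightarrow> real" where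
  "payoff2 P c \<sigma>1 \<sigma>2 = (\<Sum>th\<in>UNIV. \<Sum>s1\<in>UNIV. \<Sum>s2\<in>UNIV.
      P th s1 s2 * \<sigma>2 s2 * ((if th then \<sigma>1 s1 else 0) - c))"

definition is_BNE :: "(bool \<Rightarrow> bool \<Rightarrow> bool \<Rightarrow> real) \<Rightarrow> real \<Rightarrow> (bool \<Rightarrow> real) \<Rightarrow> (bool \<Rightarrow> real) \<Rightarrow> bool" where
  "is_BNE P c \<sigma>1 \<sigma>2 \<longleftrightarrow> mixed \<sigma>1 \<and> mixed \<sigma>2 \<and>
     (\<forall>\<tau>. mixed \<tau> \<longrightarrow> payoff1 P c \<tau> \<sigma>2 \<le> payoff1 P c \<sigma>1 \<sigma>2) \<and>
     (\<forall>\<tau>. mixed \<tau> \<longrightarrow> payoff2 P c \<sigma>1 \<tau> \<le> payoff2 P c \<sigma>1 \<sigma>2)"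

definition both_adopt :: "(bool \<Rightarrow> bool \<Rightarrow> bool \<Rightarrow> real) \<Rightarrow> (bool \<Rightarrow> real) \<Rightarrow> (bool \<Rightarrow> real) \<Rightarrow> real" where
  "both_adopt P \<sigma>1 \<sigma>2 = (\<Sum>th\<in>UNIV. \<Sum>s1\<in>UNIV. \<Sum>s2\<in>UNIV. P th s1 s2 * \<sigma>1 s1 * \<sigma>2 s2)"

end

theory Submission
  imports Defs
begin

text \<open>Under a deterministic seed with cost \<open>c\<close> slightly above \<open>1 - \<epsilon>\<close>, adoption unravels by
  iterated elimination: an uninformed agent never adopts, because the good state is too
  unlikely; hence the uninformed non-seeded agent never adopts either; hence the informed
  seeded agent, whose partner is then informed only with probability \<open>1 - \<epsilon>\<close>, earns at most
  \<open>(1 - \<epsilon>) - c < 0\<close> and never adopts; so nobody ever adopts together. Under random seeding an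
  informed agent does not know whether she was the seed, so she expects her partner to be
  informed with probability \<open>2(1 - \<epsilon>)/(2 - \<epsilon>) > 1 - \<epsilon>\<close>, and for \<open>c\<close> below this threshold
  "adopt iff informed" is an equilibrium with joint adoption probability \<open>\<rho>(1 - \<epsilon>)\<^sup>2 > 0\<close>.\<close>

definition swap_agents :: "(bool \<Rightarrow> bool \<Rightarrow> bool \<Rightarrow> real) \<Rightarrow> bool \<Rightarrow> bool \<Rightarrow> bool \<Rightarrow> real" where
  "swap_agents P th s1 s2 = P th s2 s1"

text \<open>Agent 1's gain from adopting on signal \<open>s\<close>, weighted by the probability of \<open>s\<close>
  rather than conditioned on it; its sign is that of the interim gain.\<close>
definition adoption_gain :: "(bool \<Rightarrow> bool \<Rightarrow> bool \<Rightarrow> real) \<Rightarrow> real \<Rightarrow> (bool \<Rightarrow> real) \<Rightarrow> bool \<Rightarrow> real" where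
  "adoption_gain P c \<sigma>2 s = (\<Sum>th\<in>UNIV. \<Sum>s2\<in>UNIV. P th s s2 * ((if th then \<sigma>2 s2 else 0) - c))"

definition best_response :: "(bool \<Rightarrow> bool \<Rightarrow> bool \<Rightarrow> real) \<Rightarrow> real \<Rightarrow> (bool \<Rightarrow> real) \<Rightarrow> (bool \<Rightarrow> real) \<Rightarrow> bool" where
  "best_response P c \<sigma>1 \<sigma>2 \<longleftrightarrow> mixed \<sigma>1 \<and> (\<forall>\<tau>. mixed \<tau> \<longrightarrow> payoff1 P c \<tau> \<sigma>2 \<le> payoff1 P c \<sigma>1 \<sigma>2)"

lemma payoff1_eq_adoption_gain:
  "payoff1 P c \<tau> \<sigma>2 = \<tau> True * adoption_gain P c \<sigma>2 True + \<tau> False * adoption_gain P c \<sigma>2 False"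
  by (simp add: payoff1_def adoption_gain_def UNIV_bool algebra_simps)

lemma payoff1_fun_upd:
  "payoff1 P c (\<tau>(s := v)) \<sigma>2 = payoff1 P c \<tau> \<sigma>2 + (v - \<tau> s) * adoption_gain P c \<sigma>2 s"
  by (cases s) (simp_all add: payoff1_eq_adoption_gain algebra_simps)

lemma payoff2_eq_payoff1_swap: "payoff2 P c \<sigma>1 \<sigma>2 = payoff1 (swap_agents P) c \<sigma>2 \<sigma>1"
  by (simp add: payoff1_def payoff2_def swap_agents_def UNIV_bool algebra_simps)

lemma both_adopt_swap: "both_adopt (swap_agents P) \<sigma>2 \<sigma>1 = both_adopt P \<sigma>1 \<sigma>2"
  by (simp add: both_adopt_def swap_agents_def UNIV_bool algebra_simps)

lemma swap_agents_swap_agents [simp]: "swap_agents (swap_agents P) = P"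
  by (simp add: swap_agents_def fun_eq_iff)

lemma is_BNE_iff_best_responses:
  "is_BNE P c \<sigma>1 \<sigma>2 \<longleftrightarrow> best_response P c \<sigma>1 \<sigma>2 \<and> best_response (swap_agents P) c \<sigma>2 \<sigma>1"
  by (auto simp: is_BNE_def best_response_def payoff2_eq_payoff1_swap)

lemma is_BNE_swap: "is_BNE (swap_agents P) c \<sigma>2 \<sigma>1 \<longleftrightarrow> is_BNE P c \<sigma>1 \<sigma>2"
  by (auto simp: is_BNE_iff_best_responses)

lemma best_response_iff_adoption_gain:
  "best_response P c \<sigma>1 \<sigma>2 \<longleftrightarrow> mixed \<sigma>1 \<and>
     (\<forall>s. (adoption_gain P c \<sigma>2 s < 0 \<longrightarrow> \<sigma>1 s = 0) \<and> (0 < adoption_gain P c \<sigma>2 s \<longrightarrow> \<sigma>1 s = 1))"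
  (is "_ \<longleftrightarrow> mixed \<sigma>1 \<and> (\<forall>s. ?neg s \<and> ?pos s)")
proof
  assume br: "best_response P c \<sigma>1 \<sigma>2"
  hence m: "mixed \<sigma>1" by (simp add: best_response_def)
  have deviation: "(v - \<sigma>1 s) * adoption_gain P c \<sigma>2 s \<le> 0" if "0 \<le> v" "v \<le> 1" for s v
  proof -
    have "mixed (\<sigma>1(s := v))" using m that by (simp add: mixed_def)
    with br have "payoff1 P c (\<sigma>1(s := v)) \<sigma>2 \<le> payoff1 P c \<sigma>1 \<sigma>2"
      by (simp add: best_response_def)
    then show ?thesis by (simp add: payoff1_fun_upd)
  qed
  have "?neg s" for s
    using deviation[of 0 s] m by (auto simp: mixed_def zero_le_mult_iff intro: order.antisym)
  moreover have "?pos s" for s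
    using deviation[of 1 s] m by (auto simp: mixed_def mult_le_0_iff intro: order.antisym)
  ultimately show "mixed \<sigma>1 \<and> (\<forall>s. ?neg s \<and> ?pos s)" using m by blast
next
  assume m: "mixed \<sigma>1 \<and> (\<forall>s. ?neg s \<and> ?pos s)"
  have "\<tau> s * adoption_gain P c \<sigma>2 s \<le> \<sigma>1 s * adoption_gain P c \<sigma>2 s" if "mixed \<tau>" for \<tau> s
    using m that unfolding mixed_def
    by (cases "adoption_gain P c \<sigma>2 s" "0::real" rule: linorder_cases)
       (auto simp: mult_nonneg_nonpos mult_left_le)
  then show "best_response P c \<sigma>1 \<sigma>2"
    using m by (simp add: best_response_def payoff1_eq_adoption_gain add_mono)
qed

lemma is_BNE_no_adoption_if_gain_neg:
  assumes "is_BNE P c \<sigma>1 \<sigma>2" and "adoption_gain P c \<sigma>2 s < 0"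
  shows "\<sigma>1 s = 0"
  using assms by (simp add: is_BNE_iff_best_responses best_response_iff_adoption_gain)

lemma seed2_eq_swap_seed1: "seed2 \<rho> \<epsilon> = swap_agents (seed1 \<rho> \<epsilon>)"
  by (simp add: fun_eq_iff seed1_def seed2_def swap_agents_def)

lemma swap_random_seed: "swap_agents (random_seed \<rho> \<epsilon>) = random_seed \<rho> \<epsilon>"
  by (simp add: fun_eq_iff random_seed_def seed1_def seed2_def swap_agents_def)

lemma adoption_gain_seed1:
  "adoption_gain (seed1 \<rho> \<epsilon>) c \<sigma>2 s =
     (if s then \<rho> * ((1 - \<epsilon>)\<^sup>2 * (\<sigma>2 True - c) + (1 - \<epsilon>) * \<epsilon> * (\<sigma>2 False - c))
      else \<rho> * \<epsilon> * (\<sigma>2 False - c) - (1 - \<rho>) * c)"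
  by (cases s) (simp_all add: adoption_gain_def seed1_def seed_dist_def UNIV_bool algebra_simps)

lemma adoption_gain_seed2:
  "adoption_gain (seed2 \<rho> \<epsilon>) c \<sigma>2 s =
     (if s then \<rho> * (1 - \<epsilon>)\<^sup>2 * (\<sigma>2 True - c)
      else \<rho> * (1 - \<epsilon>) * \<epsilon> * (\<sigma>2 True - c) + \<rho> * \<epsilon> * (\<sigma>2 False - c) - (1 - \<rho>) * c)"
  by (cases s) (simp_all add: adoption_gain_def seed2_def seed_dist_def UNIV_bool algebra_simps)

lemma adoption_gain_random_seed:
  "adoption_gain (random_seed \<rho> \<epsilon>) c \<sigma>2 s =
     (if s then \<rho> * ((1 - \<epsilon>)\<^sup>2 * (\<sigma>2 True - c) + (1 - \<epsilon>) * \<epsilon> / 2 * (\<sigma>2 False - c))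
      else \<rho> * (1 - \<epsilon>) * \<epsilon> / 2 * (\<sigma>2 True - c) + \<rho> * \<epsilon> * (\<sigma>2 False - c) - (1 - \<rho>) * c)"
  by (cases s)
     (simp_all add: adoption_gain_def random_seed_def seed1_def seed2_def seed_dist_def
        UNIV_bool field_simps)

lemma both_adopt_random_seed_informed:
  "both_adopt (random_seed \<rho> \<epsilon>) of_bool of_bool = \<rho> * (1 - \<epsilon>)\<^sup>2"
  by (simp add: both_adopt_def random_seed_def seed1_def seed2_def seed_dist_def UNIV_bool)

lemma is_BNE_seed1_never_both_adopt:
  assumes "0 < \<rho>" "0 < \<epsilon>" "\<epsilon> < 1" "1 - \<epsilon> < c" "\<rho> * \<epsilon> < (1 - \<rho>) * c"
    and bne: "is_BNE (seed1 \<rho> \<epsilon>) c \<tau>1 \<tau>2"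
  shows "both_adopt (seed1 \<rho> \<epsilon>) \<tau>1 \<tau>2 = 0"
proof -
  have bne2: "is_BNE (seed2 \<rho> \<epsilon>) c \<tau>2 \<tau>1"
    using bne by (simp add: seed2_eq_swap_seed1 is_BNE_swap)
  have le1: "\<tau>1 s \<le> 1" "\<tau>2 s \<le> 1" for s
    using bne by (simp_all add: is_BNE_def mixed_def)
  have "0 < c" using assms by linarith
  then have cost_nonneg: "0 \<le> \<rho> * \<epsilon> * c" using assms by simp
  have "\<tau>2 False - c \<le> 1" using assms le1[of False] by linarith
  then have "\<rho> * \<epsilon> * (\<tau>2 False - c) \<le> \<rho> * \<epsilon>"
    by (rule mult_left_le) (use assms in simp)
  then have "adoption_gain (seed1 \<rho> \<epsilon>) c \<tau>2 False < 0"
    using assms by (simp only: adoption_gain_seed1 if_False)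
  then have uninformed_1: "\<tau>1 False = 0"
    by (rule is_BNE_no_adoption_if_gain_neg[OF bne])
  have "(1 - \<epsilon>) * (\<tau>1 True - c) \<le> 1 - \<epsilon>"
    using assms le1[of True] by (intro mult_left_le) auto
  then have "(1 - \<epsilon>) * (\<tau>1 True - c) \<le> 1"
    using assms by linarith
  then have "\<rho> * \<epsilon> * ((1 - \<epsilon>) * (\<tau>1 True - c)) \<le> \<rho> * \<epsilon>"
    by (rule mult_left_le) (use assms in simp)
  moreover have "adoption_gain (seed2 \<rho> \<epsilon>) c \<tau>1 False =
      \<rho> * \<epsilon> * ((1 - \<epsilon>) * (\<tau>1 True - c)) - \<rho> * \<epsilon> * c - (1 - \<rho>) * c"
    using uninformed_1 by (simp add: adoption_gain_seed2 algebra_simps)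
  ultimately have "adoption_gain (seed2 \<rho> \<epsilon>) c \<tau>1 False < 0"
    using assms cost_nonneg by linarith
  then have uninformed_2: "\<tau>2 False = 0"
    by (rule is_BNE_no_adoption_if_gain_neg[OF bne2])
  have "(1 - \<epsilon>)\<^sup>2 * (\<tau>2 True - c) \<le> (1 - \<epsilon>)\<^sup>2 * (1 - c)"
    using le1 by (intro mult_left_mono) auto
  then have "(1 - \<epsilon>)\<^sup>2 * (\<tau>2 True - c) - (1 - \<epsilon>) * \<epsilon> * c \<le> (1 - \<epsilon>) * ((1 - \<epsilon>) - c)"
    by (simp add: power2_eq_square algebra_simps)
  also have "\<dots> < 0"
    using assms by (simp add: mult_pos_neg)
  finally have "adoption_gain (seed1 \<rho> \<epsilon>) c \<tau>2 True < 0"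
    using assms uninformed_2 by (simp add: adoption_gain_seed1 mult_pos_neg)
  then have informed_1: "\<tau>1 True = 0"
    by (rule is_BNE_no_adoption_if_gain_neg[OF bne])
  have "\<tau>1 = (\<lambda>_. 0)"
    using uninformed_1 informed_1 by (auto simp: fun_eq_iff intro: bool.induct)
  then show ?thesis by (simp add: both_adopt_def)
qed

lemma is_BNE_random_seed_informed:
  assumes "0 \<le> \<rho>" "0 \<le> \<epsilon>" "\<epsilon> \<le> 1" "0 \<le> c" "c * (2 - \<epsilon>) \<le> 2 * (1 - \<epsilon>)"
    and "\<rho> * \<epsilon> \<le> (1 - \<rho>) * c"
  shows "is_BNE (random_seed \<rho> \<epsilon>) c of_bool of_bool"
proof -
  have "(1 - \<epsilon>)\<^sup>2 * (1 - c) - (1 - \<epsilon>) * \<epsilon> / 2 * c = (1 - \<epsilon>) / 2 * (2 * (1 - \<epsilon>) - c * (2 - \<epsilon>))"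
    by (simp add: power2_eq_square field_simps)
  also have "\<dots> \<ge> 0"
    using assms by simp
  finally have informed: "0 \<le> adoption_gain (random_seed \<rho> \<epsilon>) c of_bool True"
    using assms by (simp add: adoption_gain_random_seed)
  have "(1 - \<epsilon>) * (1 - c) \<le> 1 - \<epsilon>"
    using assms by (intro mult_left_le) auto
  then have "(1 - \<epsilon>) / 2 * (1 - c) \<le> 1"
    using assms by simp
  then have "\<rho> * \<epsilon> * ((1 - \<epsilon>) / 2 * (1 - c)) \<le> \<rho> * \<epsilon>"
    by (rule mult_left_le) (use assms in simp)
  moreover have "adoption_gain (random_seed \<rho> \<epsilon>) c of_bool False =
      \<rho> * \<epsilon> * ((1 - \<epsilon>) / 2 * (1 - c)) - \<rho> * \<epsilon> * c - (1 - \<rho>) * c"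
    by (simp add: adoption_gain_random_seed algebra_simps)
  moreover have "0 \<le> \<rho> * \<epsilon> * c" using assms by simp
  ultimately have uninformed: "adoption_gain (random_seed \<rho> \<epsilon>) c of_bool False \<le> 0"
    using assms by linarith
  have "best_response (random_seed \<rho> \<epsilon>) c of_bool of_bool"
    using informed uninformed by (simp add: best_response_iff_adoption_gain mixed_def all_bool_eq)
  then show ?thesis
    by (simp add: is_BNE_iff_best_responses swap_random_seed)
qed

definition random_seeding_strictly_better :: "real \<Rightarrow> real \<Rightarrow> real \<Rightarrow> bool" where
  "random_seeding_strictly_better \<rho> \<epsilon> c \<longleftrightarrow>
     (\<exists>\<sigma>1 \<sigma>2. is_BNE (random_seed \<rho> \<epsilon>) c \<sigma>1 \<sigma>2 \<and>
        (\<forall>\<tau>1 \<tau>2. is_BNE (seed1 \<rho> \<epsilon>) c \<tau>1 \<tau>2 \<longrightarrow>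
            both_adopt (seed1 \<rho> \<epsilon>) \<tau>1 \<tau>2 < both_adopt (random_seed \<rho> \<epsilon>) \<sigma>1 \<sigma>2) \<and>
        (\<forall>\<tau>1 \<tau>2. is_BNE (seed2 \<rho> \<epsilon>) c \<tau>1 \<tau>2 \<longrightarrow>
            both_adopt (seed2 \<rho> \<epsilon>) \<tau>1 \<tau>2 < both_adopt (random_seed \<rho> \<epsilon>) \<sigma>1 \<sigma>2))"

lemma random_seeding_strictly_better_if_cost_between:
  assumes "0 < \<rho>" "0 < \<epsilon>" "\<epsilon> < 1" "1 - \<epsilon> < c" "c * (2 - \<epsilon>) \<le> 2 * (1 - \<epsilon>)"
    and "\<rho> * \<epsilon> < (1 - \<rho>) * c"
  shows "random_seeding_strictly_better \<rho> \<epsilon> c"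
proof -
  have "is_BNE (random_seed \<rho> \<epsilon>) c of_bool of_bool"
    using assms by (intro is_BNE_random_seed_informed) auto
  moreover have "0 < both_adopt (random_seed \<rho> \<epsilon>) of_bool of_bool"
    using assms by (simp add: both_adopt_random_seed_informed)
  moreover have "both_adopt (seed1 \<rho> \<epsilon>) \<tau>1 \<tau>2 = 0" if "is_BNE (seed1 \<rho> \<epsilon>) c \<tau>1 \<tau>2" for \<tau>1 \<tau>2
    using is_BNE_seed1_never_both_adopt[OF assms(1-4,6) that] .
  ultimately show ?thesis
    unfolding random_seeding_strictly_better_def
    by (auto simp: seed2_eq_swap_seed1 is_BNE_swap both_adopt_swap)
qed

theorem mainTheorem13:
  fixes \<rho> :: real
  assumes "0 < \<rho>" and "\<rho> < 1"
  shows "\<exists>\<epsilon>0 > 0. \<forall>\<epsilon>. 0 < \<epsilon> \<and> \<epsilon> < 1 \<and> \<epsilon> < \<epsilon>0 \<longrightarrow>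
           (\<exists>a b. 0 \<le> a \<and> a < b \<and> b \<le> 1 \<and>
              (\<forall>c. a < c \<and> c < b \<longrightarrow>
                 (\<exists>\<sigma>1 \<sigma>2. is_BNE (random_seed \<rho> \<epsilon>) c \<sigma>1 \<sigma>2 \<and>
                    (\<forall>\<tau>1 \<tau>2. is_BNE (seed1 \<rho> \<epsilon>) c \<tau>1 \<tau>2 \<longrightarrow>
                        both_adopt (seed1 \<rho> \<epsilon>) \<tau>1 \<tau>2 < both_adopt (random_seed \<rho> \<epsilon>) \<sigma>1 \<sigma>2) \<and>
                    (\<forall>\<tau>1 \<tau>2. is_BNE (seed2 \<rho> \<epsilon>) c \<tau>1 \<tau>2 \<longrightarrow>
                        both_adopt (seed2 \<rho> \<epsilon>) \<tau>1 \<tau>2 < both_adopt (random_seed \<rho> \<epsilon>) \<sigma>1 \<sigma>2))))"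
  unfolding random_seeding_strictly_better_def[symmetric]
proof (rule exI[of _ "min (1/2) ((1 - \<rho>) / (2 * \<rho>))"], intro conjI allI impI)
  show "0 < min (1/2) ((1 - \<rho>) / (2 * \<rho>))" using assms by simp
  fix \<epsilon> :: real
  assume \<epsilon>: "0 < \<epsilon> \<and> \<epsilon> < 1 \<and> \<epsilon> < min (1/2) ((1 - \<rho>) / (2 * \<rho>))"
  show "\<exists>a b. 0 \<le> a \<and> a < b \<and> b \<le> 1 \<and>
          (\<forall>c. a < c \<and> c < b \<longrightarrow> random_seeding_strictly_better \<rho> \<epsilon> c)"
  proof (rule exI[of _ "1 - \<epsilon>"], rule exI[of _ "2 * (1 - \<epsilon>) / (2 - \<epsilon>)"], intro conjI allI impI)
    show "0 \<le> 1 - \<epsilon>" "1 - \<epsilon> < 2 * (1 - \<epsilon>) / (2 - \<epsilon>)" "2 * (1 - \<epsilon>) / (2 - \<epsilon>) \<le> 1"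
      using \<epsilon> by (simp_all add: field_simps)
    fix c assume c: "1 - \<epsilon> < c \<and> c < 2 * (1 - \<epsilon>) / (2 - \<epsilon>)"
    have "\<rho> * \<epsilon> < (1 - \<rho>) / 2" using \<epsilon> assms by (simp add: field_simps)
    also have "\<dots> < (1 - \<rho>) * c" using \<epsilon> c assms by simp
    finally show "random_seeding_strictly_better \<rho> \<epsilon> c"
      using assms \<epsilon> c by (intro random_seeding_strictly_better_if_cost_between) (simp_all add: field_simps)
  qed
qed

end
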